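(* For every Hessenberg function $h$ on $\{1,\dots,n\}$, $\mathcal{A}_h((n))=\mathcal{B}_h$.
   Context: A Hessenberg function is $h:\{1,\dots,n\}\to\{1,\dots,n\}$, $h_i=h(i)$, with $i\le h_i\le n$ and $h_i\le h_{i+1}$. Degree tuple: $\beta_i=i-\#\{k:h_k<i\}$. $\mathcal{B}_h=\{x_1^{\alpha_1}\cdots x_n^{\alpha_n}:0\le\alpha_i\le\beta_i-1\}$. An $(h,(n))$-filling is a permutation $T=w_1\cdots w_n$ of $1,\dots,n$ in a single row with $w_t\le h(w_{t+1})$ for all $t$. A dimension pair of $T$ is $(a,b)$ with $b>a$, $b$ to the left of $a$, and, if $a$ is immediately followed by $c$, $b\le h(c)$. $D^T_j$ is the set of dimension pairs $(a,j)$, $\Phi(T)=\prod_{j=2}^n x_j^{|D^T_j|}$, and $\mathcal{A}_h((n))=\{\Phi(T):T\text{ an }(h,(n))\text{-filling}\}$. *)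

theory Defs
  imports Main
begin

text \<open>A Hessenberg function on {1..n}, represented as h :: nat => nat (values outside {1..n} irrelevant).\<close>
definition hessenberg :: "nat \<Rightarrow> (nat \<Rightarrow> nat) \<Rightarrow> bool" where
  "hessenberg n h \<longleftrightarrow> (\<forall>i\<in>{1..n}. i \<le> h i \<and> h i \<le> n) \<and> (\<forall>i. 1 \<le> i \<and> i < n \<longrightarrow> h i \<le> h (Suc i))"

definition degree_tuple :: "nat \<Rightarrow> (nat \<Rightarrow> nat) \<Rightarrow> nat \<Rightarrow> int" where
  "degree_tuple n h i = int i - int (card {k\<in>{1..n}. h k < i})"

text \<open>Monomials x_1^a_1 ... x_n^a_n are represented by their exponent vectors
  alpha :: nat => nat, with alpha i = 0 for i outside {1..n}.\<close>
definition B_h :: "nat \<Rightarrow> (nat \<Rightarrow> nat) \<Rightarrow> (nat \<Rightarrow> nat) set" where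
  "B_h n h = {\<alpha>. (\<forall>i\<in>{1..n}. 0 \<le> int (\<alpha> i) \<and> int (\<alpha> i) \<le> degree_tuple n h i - 1)
                 \<and> (\<forall>i. i \<notin> {1..n} \<longrightarrow> \<alpha> i = 0)}"

text \<open>An (h,(n))-filling: a one-row arrangement w_1 ... w_n (list, 0-indexed) of 1..n
  with w_t <= h(w_{t+1}).\<close>
definition filling :: "nat \<Rightarrow> (nat \<Rightarrow> nat) \<Rightarrow> nat list \<Rightarrow> bool" where
  "filling n h T \<longleftrightarrow> length T = n \<and> distinct T \<and> set T = {1..n}
     \<and> (\<forall>t. Suc t < n \<longrightarrow> T ! t \<le> h (T ! Suc t))"

definition dim_pair :: "(nat \<Rightarrow> nat) \<Rightarrow> nat list \<Rightarrow> nat \<Rightarrow> nat \<Rightarrow> bool" where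
  "dim_pair h T a b \<longleftrightarrow> b > a \<and>
     (\<exists>p q. p < q \<and> q < length T \<and> T ! p = b \<and> T ! q = a
        \<and> (Suc q < length T \<longrightarrow> b \<le> h (T ! Suc q)))"

definition D_set :: "(nat \<Rightarrow> nat) \<Rightarrow> nat list \<Rightarrow> nat \<Rightarrow> nat set" where
  "D_set h T j = {a. dim_pair h T a j}"

text \<open>Phi(T) = prod_{j=2}^n x_j^{|D_j|}, as an exponent vector.\<close>
definition Phi :: "nat \<Rightarrow> (nat \<Rightarrow> nat) \<Rightarrow> nat list \<Rightarrow> (nat \<Rightarrow> nat)" where
  "Phi n h T = (\<lambda>j. if 2 \<le> j \<and> j \<le> n then card (D_set h T j) else 0)"

definition A_h :: "nat \<Rightarrow> (nat \<Rightarrow> nat) \<Rightarrow> (nat \<Rightarrow> nat) set" where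
  "A_h n h = {Phi n h T | T. filling n h T}"

end

theory Submission imports Defs begin

text \<open>
  Proof by induction on n, deleting the largest letter n = m + 1 from a one-row filling.
  For a Hessenberg function h on {1..m+1} let g i = min (h i) m, a Hessenberg function on {1..m}.

  A row T is an (h,(m+1))-filling exactly when T = xs @ (m+1) # ys, where xs @ ys is a
  (g,(m))-filling and the letter right after m+1 (if any) is some c with h c = m+1.
  Deleting m+1 does not change the dimension pairs (a,j) with j \<le> m, while the dimension pairs
  (a, m+1) are the letters a of ys whose successor c (if any) has h c = m+1; these are
  counted by #{c in ys. h c = m+1}. Since the cut point of xs @ ys may be chosen freely, this
  exponent of x_{m+1} takes every value from 0 up to N = #{k in {1..m}. h k = m+1}.
  Hence A_h((m+1)) arises from A_g((m)) by adjoining any exponent k \<le> N of x_{m+1}.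
  On the other side the degree tuples of h and g agree below m+1 and the (m+1)-st entry of
  the degree tuple of h is N + 1, so B_h has the same recursive description, and the
  induction closes.
\<close>

subsection \<open>Adjacent letters and relative order in a list\<close>

fun adj_pairs :: "'a list \<Rightarrow> ('a \<times> 'a) set" where
  "adj_pairs (x # y # zs) = insert (x, y) (adj_pairs (y # zs))"
| "adj_pairs _ = {}"

lemma adj_pairs_append:
  "adj_pairs (xs @ ys) = adj_pairs xs \<union> adj_pairs ys
     \<union> (if xs \<noteq> [] \<and> ys \<noteq> [] then {(last xs, hd ys)} else {})"
proof (induction xs rule: adj_pairs.induct)
  case ("2_2" v)
  then show ?case by (cases ys) auto
qed auto

lemma adj_pairs_insert:
  "adj_pairs (xs @ z # ys) = adj_pairs xs \<union> adj_pairs ys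
     \<union> (if xs \<noteq> [] then {(last xs, z)} else {}) \<union> (if ys \<noteq> [] then {(z, hd ys)} else {})"
proof -
  have "adj_pairs (z # ys) = adj_pairs ys \<union> (if ys \<noteq> [] then {(z, hd ys)} else {})"
    by (cases ys) auto
  then show ?thesis by (simp add: adj_pairs_append Un_ac)
qed

lemma adj_pairs_in_set: "(a, c) \<in> adj_pairs T \<Longrightarrow> a \<in> set T \<and> c \<in> set T"
  by (induction T rule: adj_pairs.induct) auto

lemma adj_pairs_zip: "adj_pairs T = set (zip T (tl T))"
  by (induction T rule: adj_pairs.induct) auto

lemma adj_pairs_nth:
  "(a, c) \<in> adj_pairs T \<longleftrightarrow> (\<exists>i. Suc i < length T \<and> T ! i = a \<and> T ! Suc i = c)"
  by (auto simp: adj_pairs_zip in_set_zip nth_tl less_diff_conv)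

definition occurs_before :: "'a list \<Rightarrow> 'a \<Rightarrow> 'a \<Rightarrow> bool" where
  "occurs_before T x y \<longleftrightarrow> (\<exists>p q. p < q \<and> q < length T \<and> T ! p = x \<and> T ! q = y)"

lemma occurs_before_Cons:
  "occurs_before (t # T) x y \<longleftrightarrow> (t = x \<and> y \<in> set T) \<or> occurs_before T x y"
proof
  assume "occurs_before (t # T) x y"
  then obtain p q where pq: "p < q" "q < length (t # T)" "(t # T) ! p = x" "(t # T) ! q = y"
    unfolding occurs_before_def by blast
  then obtain q' where q: "q = Suc q'" by (cases q) auto
  show "(t = x \<and> y \<in> set T) \<or> occurs_before T x y"
  proof (cases p)
    case 0
    then show ?thesis using pq q by auto
  next
    case (Suc p')
    then have "p' < q' \<and> q' < length T \<and> T ! p' = x \<and> T ! q' = y" using pq q by auto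
    then show ?thesis unfolding occurs_before_def by blast
  qed
next
  assume "(t = x \<and> y \<in> set T) \<or> occurs_before T x y"
  then show "occurs_before (t # T) x y"
  proof
    assume "t = x \<and> y \<in> set T"
    then obtain q where "q < length T" "T ! q = y" "t = x" by (auto simp: in_set_conv_nth)
    then show ?thesis unfolding occurs_before_def by (intro exI[of _ 0] exI[of _ "Suc q"]) auto
  next
    assume "occurs_before T x y"
    then obtain p q where "p < q" "q < length T" "T ! p = x" "T ! q = y"
      unfolding occurs_before_def by blast
    then show ?thesis unfolding occurs_before_def by (intro exI[of _ "Suc p"] exI[of _ "Suc q"]) auto
  qed
qed

lemma occurs_before_in_set: "occurs_before T x y \<Longrightarrow> x \<in> set T \<and> y \<in> set T"
  unfolding occurs_before_def by auto

lemma occurs_before_delete: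
  "z \<noteq> a \<Longrightarrow> z \<noteq> b \<Longrightarrow> occurs_before (xs @ z # ys) b a \<longleftrightarrow> occurs_before (xs @ ys) b a"
  by (induction xs) (auto simp: occurs_before_Cons)

lemma occurs_before_inserted:
  "z \<notin> set xs \<Longrightarrow> z \<notin> set ys \<Longrightarrow> occurs_before (xs @ z # ys) z a \<longleftrightarrow> a \<in> set ys"
  by (induction xs) (auto simp: occurs_before_Cons dest: occurs_before_in_set)

lemma adj_pairs_distinct_nth:
  assumes "distinct T" "q < length T" "T ! q = a"
  shows "(a, c) \<in> adj_pairs T \<longleftrightarrow> Suc q < length T \<and> c = T ! Suc q"
  using assms by (auto simp: adj_pairs_nth nth_eq_iff_index_eq)

lemma dim_pair_iff:
  assumes "distinct T"
  shows "dim_pair h T a b \<longleftrightarrow>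
           a < b \<and> occurs_before T b a \<and> (\<forall>c. (a, c) \<in> adj_pairs T \<longrightarrow> b \<le> h c)"
proof -
  have "(Suc q < length T \<longrightarrow> b \<le> h (T ! Suc q)) \<longleftrightarrow> (\<forall>c. (a, c) \<in> adj_pairs T \<longrightarrow> b \<le> h c)"
    if "q < length T" "T ! q = a" for q
    using adj_pairs_distinct_nth[OF assms that] by auto
  then show ?thesis unfolding dim_pair_def occurs_before_def by blast
qed

lemma filling_iff:
  "filling n h T \<longleftrightarrow> length T = n \<and> distinct T \<and> set T = {1..n}
     \<and> (\<forall>(a, c) \<in> adj_pairs T. a \<le> h c)"
  unfolding filling_def by (fastforce simp: adj_pairs_nth)

subsection \<open>Restricting a Hessenberg function and inserting the top letter\<close>

definition hess_restrict :: "nat \<Rightarrow> (nat \<Rightarrow> nat) \<Rightarrow> nat \<Rightarrow> nat" where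
  "hess_restrict m h = (\<lambda>i. min (h i) m)"

lemma hessenberg_le: "hessenberg n h \<Longrightarrow> c \<in> {1..n} \<Longrightarrow> h c \<le> n"
  unfolding hessenberg_def by auto

lemma hessenberg_top: "hessenberg (Suc m) h \<Longrightarrow> h (Suc m) = Suc m"
  unfolding hessenberg_def by (metis atLeastAtMost_iff le_add1 le_antisym plus_1_eq_Suc order_refl)

lemma hessenberg_restrict: "hessenberg (Suc m) h \<Longrightarrow> hessenberg m (hess_restrict m h)"
  unfolding hessenberg_def hess_restrict_def by (auto simp: min_def)

lemma filling_remove_top:
  assumes H: "hessenberg (Suc m) h" and F: "filling (Suc m) h T"
  obtains xs ys where "T = xs @ Suc m # ys" and "filling m (hess_restrict m h) (xs @ ys)"
    and "ys = [] \<or> h (hd ys) = Suc m"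
proof -
  have F': "length T = Suc m" "distinct T" "set T = {1..Suc m}" "\<forall>(a, c) \<in> adj_pairs T. a \<le> h c"
    using F by (auto simp: filling_iff)
  have "Suc m \<in> set T" using F'(3) by simp
  then obtain xs ys where T: "T = xs @ Suc m # ys" by (meson split_list)
  have "set (xs @ ys) = set T - {Suc m}" using F'(2) T by auto
  also have "\<dots> = {1..m}" unfolding F'(3) by auto
  finally have st: "set (xs @ ys) = {1..m}" .
  have hy: "ys = [] \<or> h (hd ys) = Suc m"
  proof (cases ys)
    case (Cons y r)
    then have "Suc m \<le> h y" using F'(4) T by (simp add: adj_pairs_insert)
    moreover have "y \<in> set T" using T Cons by simp
    then have "y \<in> {1..Suc m}" using F'(3) by blast
    then have "h y \<le> Suc m" using hessenberg_le[OF H] by blast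
    ultimately show ?thesis using Cons by simp
  qed simp
  have "a \<le> hess_restrict m h c" if ac: "(a, c) \<in> adj_pairs (xs @ ys)" for a c
  proof -
    have "a \<le> m" using adj_pairs_in_set[OF ac] st by auto
    moreover have "a \<le> h c"
    proof (cases "(a, c) \<in> adj_pairs xs \<union> adj_pairs ys")
      case True
      then have "(a, c) \<in> adj_pairs T" using T by (auto simp: adj_pairs_insert)
      then show ?thesis using F'(4) by blast
    next
      case False
      then have "ys \<noteq> [] \<and> c = hd ys" using ac by (auto simp: adj_pairs_append split: if_splits)
      then show ?thesis using hy \<open>a \<le> m\<close> by auto
    qed
    ultimately show ?thesis by (simp add: hess_restrict_def)
  qed
  moreover have "length (xs @ ys) = m" "distinct (xs @ ys)" using F'(1,2) T by auto
  ultimately have "filling m (hess_restrict m h) (xs @ ys)"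
    using st by (auto simp: filling_iff)
  then show thesis using T hy by (intro that)
qed

lemma filling_insert_top:
  assumes H: "hessenberg (Suc m) h" and F: "filling m (hess_restrict m h) (xs @ ys)"
    and hy: "ys = [] \<or> h (hd ys) = Suc m"
  shows "filling (Suc m) h (xs @ Suc m # ys)"
proof -
  have F': "length (xs @ ys) = m" "distinct (xs @ ys)" "set (xs @ ys) = {1..m}"
    "\<forall>(a, c) \<in> adj_pairs (xs @ ys). a \<le> hess_restrict m h c"
    using F by (auto simp: filling_iff)
  have top_new: "Suc m \<notin> set (xs @ ys)" unfolding F'(3) by simp
  have "set (xs @ Suc m # ys) = insert (Suc m) (set (xs @ ys))" by simp
  also have "\<dots> = {1..Suc m}" unfolding F'(3) by auto
  finally have st: "set (xs @ Suc m # ys) = {1..Suc m}" .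
  have "a \<le> h c" if ac: "(a, c) \<in> adj_pairs (xs @ Suc m # ys)" for a c
  proof (cases "(a, c) \<in> adj_pairs xs \<union> adj_pairs ys")
    case True
    then have "(a, c) \<in> adj_pairs (xs @ ys)" by (auto simp: adj_pairs_append)
    then show ?thesis using F'(4) by (auto simp: hess_restrict_def)
  next
    case False
    then have "(xs \<noteq> [] \<and> a = last xs \<and> c = Suc m) \<or> (ys \<noteq> [] \<and> a = Suc m \<and> c = hd ys)"
      using ac by (auto simp: adj_pairs_insert split: if_splits)
    then show ?thesis
    proof
      assume last: "xs \<noteq> [] \<and> a = last xs \<and> c = Suc m"
      then have "a \<in> set (xs @ ys)" by simp
      then have "a \<le> m" unfolding F'(3) by simp
      then show ?thesis using last hessenberg_top[OF H] by simp
    next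
      assume "ys \<noteq> [] \<and> a = Suc m \<and> c = hd ys"
      then show ?thesis using hy by auto
    qed
  qed
  moreover have "length (xs @ Suc m # ys) = Suc m" "distinct (xs @ Suc m # ys)"
    using F'(1,2) top_new by auto
  ultimately show ?thesis using st by (auto simp: filling_iff)
qed

subsection \<open>The statistic Phi under insertion of the top letter\<close>

text \<open>Counting the letters of a nonempty list without repetitions whose successor (if any)
  satisfies Q: the last letter always counts, every other one iff its successor satisfies Q.\<close>
lemma card_successor_property:
  "distinct ys \<Longrightarrow> ys \<noteq> [] \<Longrightarrow>
   card {a \<in> set ys. \<forall>c. (a, c) \<in> adj_pairs ys \<longrightarrow> Q c} = Suc (length (filter Q (tl ys)))"
proof (induction ys rule: adj_pairs.induct)
  case (1 y z r)
  have y_new: "y \<notin> set (z # r)" using 1 by auto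
  have "{a \<in> set (y # z # r). \<forall>c. (a, c) \<in> adj_pairs (y # z # r) \<longrightarrow> Q c} =
     (if Q z then {y} else {}) \<union> {a \<in> set (z # r). \<forall>c. (a, c) \<in> adj_pairs (z # r) \<longrightarrow> Q c}"
    using y_new by (auto dest: adj_pairs_in_set)
  then show ?case using 1 y_new by (auto simp: card_insert_if)
qed auto

lemma dim_pair_delete_top:
  assumes H: "hessenberg (Suc m) h" and dist: "distinct (xs @ Suc m # ys)"
    and hy: "ys = [] \<or> h (hd ys) = Suc m" and jm: "j \<le> m"
  shows "dim_pair h (xs @ Suc m # ys) a j \<longleftrightarrow> dim_pair (hess_restrict m h) (xs @ ys) a j"
proof (cases "a < j")
  case True
  let ?T = "xs @ Suc m # ys" and ?g = "hess_restrict m h"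
  have a_top: "a \<noteq> Suc m" using True jm by simp
  have common: "j \<le> h c \<longleftrightarrow> j \<le> ?g c" for c
    using jm by (simp add: hess_restrict_def)
  have old: "(a, c) \<in> adj_pairs ?T \<and> (a, c) \<in> adj_pairs (xs @ ys)"
    if "(a, c) \<in> adj_pairs xs \<union> adj_pairs ys" for c
    using that adj_pairs_insert[of xs "Suc m" ys] adj_pairs_append[of xs ys] by blast
  have new_T: "j \<le> h c" if "(a, c) \<in> adj_pairs ?T" "(a, c) \<notin> adj_pairs xs \<union> adj_pairs ys" for c
  proof -
    have "c = Suc m" using that a_top by (auto simp: adj_pairs_insert split: if_splits)
    then show ?thesis using hessenberg_top[OF H] jm by simp
  qed
  have new_L: "j \<le> ?g c" if "(a, c) \<in> adj_pairs (xs @ ys)" "(a, c) \<notin> adj_pairs xs \<union> adj_pairs ys" for c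
  proof -
    have "ys \<noteq> [] \<and> c = hd ys" using that by (auto simp: adj_pairs_append split: if_splits)
    then show ?thesis using hy jm by (simp add: hess_restrict_def)
  qed
  have "(\<forall>c. (a, c) \<in> adj_pairs ?T \<longrightarrow> j \<le> h c) \<longleftrightarrow> (\<forall>c. (a, c) \<in> adj_pairs (xs @ ys) \<longrightarrow> j \<le> ?g c)"
    using common old new_T new_L by blast
  moreover have "occurs_before ?T j a \<longleftrightarrow> occurs_before (xs @ ys) j a"
    using a_top jm by (intro occurs_before_delete) auto
  ultimately show ?thesis
    using dist by (simp add: dim_pair_iff)
next
  case False
  then show ?thesis using dist by (simp add: dim_pair_iff)
qed

lemma D_set_top:
  assumes H: "hessenberg (Suc m) h" and F: "filling (Suc m) h (xs @ Suc m # ys)"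
  shows "D_set h (xs @ Suc m # ys) (Suc m) = {a \<in> set ys. \<forall>c. (a, c) \<in> adj_pairs ys \<longrightarrow> h c = Suc m}"
proof -
  let ?T = "xs @ Suc m # ys"
  have dist: "distinct ?T" and st: "set ?T = {1..Suc m}" using F by (auto simp: filling_def)
  have bounded: "h c \<le> Suc m" if "c \<in> set ?T" for c
    using that st hessenberg_le[OF H] by blast
  have "dim_pair h ?T a (Suc m) \<longleftrightarrow> a \<in> set ys \<and> (\<forall>c. (a, c) \<in> adj_pairs ys \<longrightarrow> h c = Suc m)" for a
  proof (cases "a \<in> set ys")
    case True
    then have a_old: "a \<noteq> Suc m" "a \<notin> set xs" using dist by auto
    have "a \<in> set ?T" using True by simp
    then have "a < Suc m" using st a_old(1) by auto
    moreover have "occurs_before ?T (Suc m) a" using True dist by (simp add: occurs_before_inserted)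
    moreover have "(a, c) \<in> adj_pairs ?T \<longleftrightarrow> (a, c) \<in> adj_pairs ys" for c
      using a_old by (auto simp: adj_pairs_insert dest: adj_pairs_in_set)
    moreover have "Suc m \<le> h c \<longleftrightarrow> h c = Suc m" if "(a, c) \<in> adj_pairs ys" for c
      using bounded adj_pairs_in_set[OF that] by fastforce
    ultimately show ?thesis using True dist by (auto simp: dim_pair_iff)
  next
    case False
    then show ?thesis using dist by (simp add: dim_pair_iff occurs_before_inserted)
  qed
  then show ?thesis by (auto simp: D_set_def)
qed

lemma Phi_insert_top:
  assumes H: "hessenberg (Suc m) h" and F: "filling (Suc m) h (xs @ Suc m # ys)"
    and hy: "ys = [] \<or> h (hd ys) = Suc m"
  shows "Phi (Suc m) h (xs @ Suc m # ys) =
     (Phi m (hess_restrict m h) (xs @ ys))(Suc m := length (filter (\<lambda>c. h c = Suc m) ys))"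
proof
  fix j
  let ?T = "xs @ Suc m # ys"
  have dist: "distinct ?T" using F by (simp add: filling_def)
  consider "j = Suc m" | "2 \<le> j" "j \<le> m" | "j \<noteq> Suc m" "\<not> (2 \<le> j \<and> j \<le> m)" by linarith
  then show "Phi (Suc m) h ?T j =
     ((Phi m (hess_restrict m h) (xs @ ys))(Suc m := length (filter (\<lambda>c. h c = Suc m) ys))) j"
  proof cases
    case 1
    show ?thesis
    proof (cases ys)
      case Nil
      then show ?thesis using 1 D_set_top[OF H F] by (simp add: Phi_def)
    next
      case (Cons y r)
      then have "m \<noteq> 0" using F by (auto simp: filling_def)
      moreover have "card (D_set h ?T (Suc m)) = length (filter (\<lambda>c. h c = Suc m) ys)"
        using D_set_top[OF H F] card_successor_property[of ys "\<lambda>c. h c = Suc m"] dist hy Cons by simp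
      ultimately show ?thesis using 1 by (simp add: Phi_def)
    qed
  next
    case 2
    then have "D_set h ?T j = D_set (hess_restrict m h) (xs @ ys) j"
      unfolding D_set_def using dim_pair_delete_top[OF H dist hy] by auto
    then show ?thesis using 2 by (simp add: Phi_def)
  next
    case 3
    then show ?thesis by (auto simp: Phi_def)
  qed
qed

text \<open>All exponent vectors obtained from vectors in S by setting the j-th exponent to some
  value at most K. Both A_h and B_h for n = m+1 arise in this way from n = m.\<close>
definition top_extensions :: "nat \<Rightarrow> (nat \<Rightarrow> nat) set \<Rightarrow> nat \<Rightarrow> (nat \<Rightarrow> nat) set" where
  "top_extensions j S K = {\<beta>(j := k) | \<beta> k. \<beta> \<in> S \<and> k \<le> K}"

lemma top_extensions_iff:
  assumes "\<forall>\<beta>\<in>S. \<beta> j = 0"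
  shows "\<alpha> \<in> top_extensions j S K \<longleftrightarrow> \<alpha>(j := 0) \<in> S \<and> \<alpha> j \<le> K"
proof
  assume "\<alpha> \<in> top_extensions j S K"
  then obtain \<beta> k where "\<alpha> = \<beta>(j := k)" "\<beta> \<in> S" "k \<le> K" by (auto simp: top_extensions_def)
  moreover have "\<beta>(j := 0) = \<beta>" using assms \<open>\<beta> \<in> S\<close> by auto
  ultimately show "\<alpha>(j := 0) \<in> S \<and> \<alpha> j \<le> K" by simp
next
  assume "\<alpha>(j := 0) \<in> S \<and> \<alpha> j \<le> K"
  moreover have "\<alpha> = (\<alpha>(j := 0))(j := \<alpha> j)" by simp
  ultimately show "\<alpha> \<in> top_extensions j S K" unfolding top_extensions_def by blast
qed

subsection \<open>The recursion for A_h\<close>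

lemma length_filter_filling:
  assumes "filling m g L"
  shows "length (filter Q L) = card {k \<in> {1..m}. Q k}"
proof -
  have "distinct L" "set L = {1..m}" using assms by (auto simp: filling_def)
  then have "length (filter Q L) = card ({x. Q x} \<inter> {1..m})" by (simp add: distinct_length_filter)
  also have "{x. Q x} \<inter> {1..m} = {k \<in> {1..m}. Q k}" by auto
  finally show ?thesis .
qed

lemma suffix_with_count:
  "k \<le> length (filter Q L) \<Longrightarrow>
   \<exists>xs ys. L = xs @ ys \<and> length (filter Q ys) = k \<and> (ys = [] \<or> Q (hd ys))"
proof (induction L)
  case (Cons x L)
  show ?case
  proof (cases "k \<le> length (filter Q L)")
    case True
    then obtain xs ys where "L = xs @ ys" "length (filter Q ys) = k" "ys = [] \<or> Q (hd ys)"
      using Cons.IH by blast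
    then show ?thesis by (intro exI[of _ "x # xs"] exI[of _ ys]) auto
  next
    case False
    then have "Q x" "k = length (filter Q (x # L))" using Cons.prems by (auto split: if_splits)
    then show ?thesis by (intro exI[of _ "[]"] exI[of _ "x # L"]) auto
  qed
qed simp

lemma A_h_Suc:
  assumes H: "hessenberg (Suc m) h"
  shows "A_h (Suc m) h =
    top_extensions (Suc m) (A_h m (hess_restrict m h)) (card {k \<in> {1..m}. h k = Suc m})"
    (is "_ = top_extensions _ (A_h m ?g) ?N")
proof (intro set_eqI iffI)
  let ?Q = "\<lambda>c. h c = Suc m"
  fix \<alpha> assume "\<alpha> \<in> A_h (Suc m) h"
  then obtain T where F: "filling (Suc m) h T" and \<alpha>: "\<alpha> = Phi (Suc m) h T"
    unfolding A_h_def by blast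
  obtain xs ys where T: "T = xs @ Suc m # ys" and FL: "filling m ?g (xs @ ys)"
    and hy: "ys = [] \<or> h (hd ys) = Suc m"
    using filling_remove_top[OF H F] by blast
  have "\<alpha> = (Phi m ?g (xs @ ys))(Suc m := length (filter ?Q ys))"
    using Phi_insert_top[OF H F[unfolded T] hy] \<alpha> T by simp
  moreover have "Phi m ?g (xs @ ys) \<in> A_h m ?g" unfolding A_h_def using FL by blast
  moreover have "length (filter ?Q ys) \<le> ?N"
    using length_filter_filling[OF FL, of ?Q] by simp
  ultimately show "\<alpha> \<in> top_extensions (Suc m) (A_h m ?g) ?N"
    unfolding top_extensions_def by blast
next
  let ?Q = "\<lambda>c. h c = Suc m"
  fix \<alpha> assume "\<alpha> \<in> top_extensions (Suc m) (A_h m ?g) ?N"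
  then obtain L k where FL: "filling m ?g L" and \<alpha>: "\<alpha> = (Phi m ?g L)(Suc m := k)"
    and k: "k \<le> ?N"
    unfolding top_extensions_def A_h_def by blast
  obtain xs ys where L: "L = xs @ ys" and ys: "length (filter ?Q ys) = k"
    and hy: "ys = [] \<or> ?Q (hd ys)"
    using suffix_with_count[of k ?Q L] k length_filter_filling[OF FL, of ?Q] by auto
  have F: "filling (Suc m) h (xs @ Suc m # ys)"
    using filling_insert_top[OF H] FL L hy by blast
  have "Phi (Suc m) h (xs @ Suc m # ys) = \<alpha>"
    using Phi_insert_top[OF H F hy] \<alpha> L ys by simp
  then show "\<alpha> \<in> A_h (Suc m) h" using F unfolding A_h_def by blast
qed

lemma A_h_zero: "A_h 0 h = {\<lambda>_. 0}"
proof -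
  have "filling 0 h T \<longleftrightarrow> T = []" for T by (auto simp: filling_def)
  then show ?thesis by (auto simp: A_h_def Phi_def fun_eq_iff)
qed

subsection \<open>The recursion for B_h\<close>

lemma degree_tuple_restrict:
  assumes H: "hessenberg (Suc m) h" and i: "i \<in> {1..m}"
  shows "degree_tuple (Suc m) h i = degree_tuple m (hess_restrict m h) i"
proof -
  have "{k \<in> {1..Suc m}. h k < i} = {k \<in> {1..m}. hess_restrict m h k < i}"
    using hessenberg_top[OF H] i by (auto simp: hess_restrict_def le_Suc_eq)
  then show ?thesis by (simp add: degree_tuple_def)
qed

lemma degree_tuple_top:
  assumes H: "hessenberg (Suc m) h"
  shows "degree_tuple (Suc m) h (Suc m) = int (card {k \<in> {1..m}. h k = Suc m}) + 1"
proof -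
  have below: "{k \<in> {1..Suc m}. h k < Suc m} = {k \<in> {1..m}. h k < Suc m}"
    using hessenberg_top[OF H] by (auto simp: le_Suc_eq)
  have partition: "{1..m} = {k \<in> {1..m}. h k < Suc m} \<union> {k \<in> {1..m}. h k = Suc m}"
    using hessenberg_le[OF H] by fastforce
  have "card {1..m} = card {k \<in> {1..m}. h k < Suc m} + card {k \<in> {1..m}. h k = Suc m}"
    by (subst partition, rule card_Un_disjoint) auto
  then show ?thesis unfolding degree_tuple_def below by simp
qed

lemma B_h_vanishes_above: "\<beta> \<in> B_h m g \<Longrightarrow> \<beta> (Suc m) = 0"
  by (simp add: B_h_def)

lemma B_h_Suc_iff:
  assumes H: "hessenberg (Suc m) h"
  shows "\<alpha> \<in> B_h (Suc m) h \<longleftrightarrow>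
     \<alpha>(Suc m := 0) \<in> B_h m (hess_restrict m h) \<and> \<alpha> (Suc m) \<le> card {k \<in> {1..m}. h k = Suc m}"
proof -
  have upto_Suc: "{1..Suc m} = insert (Suc m) {1..m}" by auto
  have "\<alpha> \<in> B_h (Suc m) h \<longleftrightarrow>
     (\<forall>i\<in>{1..m}. int (\<alpha> i) \<le> degree_tuple m (hess_restrict m h) i - 1)
     \<and> int (\<alpha> (Suc m)) \<le> degree_tuple (Suc m) h (Suc m) - 1
     \<and> (\<forall>i. i \<notin> {1..Suc m} \<longrightarrow> \<alpha> i = 0)"
    unfolding B_h_def upto_Suc by (auto simp: degree_tuple_restrict[OF H])
  also have "\<dots> \<longleftrightarrow>
     \<alpha>(Suc m := 0) \<in> B_h m (hess_restrict m h) \<and> \<alpha> (Suc m) \<le> card {k \<in> {1..m}. h k = Suc m}"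
    unfolding B_h_def degree_tuple_top[OF H] upto_Suc by auto
  finally show ?thesis .
qed

lemma B_h_Suc:
  assumes H: "hessenberg (Suc m) h"
  shows "B_h (Suc m) h =
    top_extensions (Suc m) (B_h m (hess_restrict m h)) (card {k \<in> {1..m}. h k = Suc m})"
  using B_h_Suc_iff[OF H] top_extensions_iff[of "B_h m (hess_restrict m h)"] B_h_vanishes_above
  by blast

lemma B_h_zero: "B_h 0 h = {\<lambda>_. 0}"
  by (auto simp: B_h_def fun_eq_iff)

theorem mainTheorem18:
  fixes n :: nat and h :: "nat \<Rightarrow> nat"
  assumes "hessenberg n h"
  shows "A_h n h = B_h n h"
  using assms
proof (induction n arbitrary: h)
  case 0
  show ?case by (simp add: A_h_zero B_h_zero)
next
  case (Suc m)
  have "A_h m (hess_restrict m h) = B_h m (hess_restrict m h)"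
    using Suc.IH hessenberg_restrict[OF Suc.prems] by blast
  then show ?case
    using A_h_Suc[OF Suc.prems] B_h_Suc[OF Suc.prems] by simp
qed

end
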